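(* Fix an integer $r\geq 1$ and let ${\mathbb{N}^r}^{*}=\mathbb{N}^r\setminus\{0\}$. Let $\alpha\in{\mathbb{N}^r}^{*}$, let $d$ be a non-negative integer with $d<|\alpha|$, let $p$ be a prime, and let $s=\mathrm{ord}_p\gcd(\alpha)$. Then there exists $\nu\in\mathcal{S}_{\alpha,d}$ such that $$\mathrm{ord}_p\frac{p^s((\nu))}{|\nu|}=0$$ if and only if $Q_p(\alpha)>Q_p(d)$.
   Context: $\mathbb{N}=\{0,1,2,\dots\}$. For $\alpha\in\mathbb{N}^r$, $|\alpha|=\alpha_1+\dots+\alpha_r$. For a finitely supported $\nu:{\mathbb{N}^r}^{*}\to\mathbb{N}$ (written $\nu\in\mathbb{N}^{({\mathbb{N}^r}^{*})}$), $|\nu|=\sum_\beta\nu_\beta$ and $((\nu))=|\nu|!/\prod_\beta(\nu_\beta!)$ is the multinomial coefficient. $\mathcal{S}_{\alpha,d}$ is the set of $\nu\in\mathbb{N}^{({\mathbb{N}^r}^{*})}$ with $\sum_\beta\nu_\beta\beta=\alpha$ and $|\nu|>d$ (i.e. factorizations of the monomial $x^\alpha$ into at least $d+1$ non-trivial monomials). For $q\in\mathbb{Q}\setminus\{0\}$, $\mathrm{ord}_p(q)$ is the exponent of $p$ in $q$. For $n\in\mathbb{N}$, $Q_p(n)(t)=a_st^s+\dots+a_0\in\mathbb{Z}[t]$ where $a_s\dots a_0$ are the base-$p$ digits of $n$ ($0\le a_i\le p-1$, $Q_p(n)(p)=n$); for $\alpha\in\mathbb{N}^r$, $Q_p(\alpha)=\sum_{i}Q_p(\alpha_i)$.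 For $P,Q\in\mathbb{Z}[t]$, $P>Q$ means $P(n)>Q(n)$ for all sufficiently large integers $n$. *)

theory Defs
  imports "HOL-Computational_Algebra.Computational_Algebra"
begin

text \<open>Elements of \<open>\<nat>^r\<close> are represented as lists of naturals of length r.\<close>

definition nonzero_vec :: "nat \<Rightarrow> nat list \<Rightarrow> bool" where
  "nonzero_vec r \<beta> \<longleftrightarrow> length \<beta> = r \<and> (\<exists>i<r. \<beta> ! i \<noteq> 0)"

definition supp :: "(nat list \<Rightarrow> nat) \<Rightarrow> nat list set" where
  "supp \<nu> = {\<beta>. \<nu> \<beta> \<noteq> 0}"

definition nu_size :: "(nat list \<Rightarrow> nat) \<Rightarrow> nat" where
  "nu_size \<nu> = (\<Sum>\<beta>\<in>supp \<nu>. \<nu> \<beta>)"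

definition multinom :: "(nat list \<Rightarrow> nat) \<Rightarrow> rat" where
  "multinom \<nu> = of_nat (fact (nu_size \<nu>)) / of_nat (\<Prod>\<beta>\<in>supp \<nu>. fact (\<nu> \<beta>))"

definition S_set :: "nat \<Rightarrow> nat list \<Rightarrow> nat \<Rightarrow> (nat list \<Rightarrow> nat) set" where
  "S_set r \<alpha> d = {\<nu>. finite (supp \<nu>) \<and> (\<forall>\<beta>\<in>supp \<nu>. nonzero_vec r \<beta>)
      \<and> (\<forall>i<r. (\<Sum>\<beta>\<in>supp \<nu>. \<nu> \<beta> * \<beta> ! i) = \<alpha> ! i)
      \<and> nu_size \<nu> > d}"

definition ord_rat :: "nat \<Rightarrow> rat \<Rightarrow> int" where
  "ord_rat p q = int (multiplicity (int p) (fst (quotient_of q)))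
                 - int (multiplicity (int p) (snd (quotient_of q)))"

definition Qp :: "nat \<Rightarrow> nat \<Rightarrow> int poly" where
  "Qp p n = (\<Sum>i\<le>n. monom (int ((n div p ^ i) mod p)) i)"

definition Qp_vec :: "nat \<Rightarrow> nat list \<Rightarrow> int poly" where
  "Qp_vec p \<alpha> = (\<Sum>i<length \<alpha>. Qp p (\<alpha> ! i))"

definition poly_gt :: "int poly \<Rightarrow> int poly \<Rightarrow> bool" where
  "poly_gt P Q \<longleftrightarrow> (\<exists>N::int. \<forall>n\<ge>N. poly P n > poly Q n)"

end

theory Submission
  imports Defs
begin

text \<open>
  Write \<open>s\<^sub>p(n) = Q\<^sub>p(n)(1)\<close> for the base-\<open>p\<close> digit sum. Legendre's formula
  \<open>(p - 1) ord\<^sub>p(n!) = n - s\<^sub>p(n)\<close> turns \<open>(p - 1) ord\<^sub>p(p\<^sup>s((\<nu>))/|\<nu>|)\<close> into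
  \<open>(p - 1)s + \<Sum>\<^sub>\<beta> s\<^sub>p(\<nu>\<^sub>\<beta>) - s\<^sub>p(|\<nu>| - 1) - 1\<close>. Writing \<open>\<nu> = p\<^sup>m\<mu>\<close> with some \<open>\<mu>\<^sub>\<beta>\<close>
  prime to \<open>p\<close> (so \<open>m \<le> s\<close>), subadditivity of digit sums shows that this is never negative.
  Equality forces \<open>m = s\<close> and carry-free additions, so that \<open>\<Sum>\<^sub>\<beta> Q\<^sub>p(\<nu>\<^sub>\<beta>)\<close> exceeds
  \<open>Q\<^sub>p(|\<nu>| - 1)\<close> for large arguments; as \<open>Q\<^sub>p\<close> is superadditive at arguments \<open>\<ge> p\<close>, the same
  holds for \<open>Q\<^sub>p(\<alpha>)\<close>, and \<open>Q\<^sub>p(|\<nu>| - 1) \<ge> Q\<^sub>p(d)\<close>.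

  Conversely, if \<open>Q\<^sub>p(\<alpha>) > Q\<^sub>p(d)\<close>, then after dividing by \<open>p\<^sup>s\<close> one peels off base-\<open>p\<close> digits to
  find \<open>\<gamma> \<le> \<alpha>/p\<^sup>s\<close> with \<open>\<Sum>\<gamma> = \<lfloor>d/p\<^sup>s\<rfloor>\<close> and \<open>\<Sum> s\<^sub>p(\<gamma>\<^sub>i) \<le> s\<^sub>p(\<Sum>\<gamma>)\<close>. The factorization
  into \<open>p\<^sup>s\<gamma>\<^sub>i\<close> unit vectors \<open>e\<^sub>i\<close> and \<open>p\<^sup>s\<close> copies of \<open>\<alpha>/p\<^sup>s - \<gamma>\<close> attains equality.
\<close>

section \<open>Base-\<open>p\<close> digit polynomials\<close>

abbreviation digit_sum :: "nat \<Rightarrow> nat \<Rightarrow> int" where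
  "digit_sum p n \<equiv> poly (Qp p n) 1"

lemma coeff_Qp:
  assumes "p \<ge> 2"
  shows "coeff (Qp p n) i = int ((n div p ^ i) mod p)"
proof -
  have "coeff (Qp p n) i = (\<Sum>k\<le>n. if k = i then int ((n div p ^ k) mod p) else 0)"
    unfolding Qp_def by (simp add: coeff_sum coeff_monom)
  also have "\<dots> = (if i \<le> n then int ((n div p ^ i) mod p) else 0)"
    by (simp add: sum.delta')
  also have "\<dots> = int ((n div p ^ i) mod p)"
  proof (cases "i \<le> n")
    case False
    have "n < 2 ^ n" by (rule less_exp)
    also have "\<dots> \<le> p ^ n" using assms by (simp add: power_mono)
    also have "\<dots> \<le> p ^ i" using False assms by (intro power_increasing) auto
    finally show ?thesis using False by simp
  qed simp
  finally show ?thesis .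
qed

lemma Qp_0 [simp]: "Qp p 0 = 0"
  unfolding Qp_def by simp

lemma Qp_div_mod:
  assumes "p \<ge> 2"
  shows "Qp p n = pCons (int (n mod p)) (Qp p (n div p))"
proof (rule poly_eqI)
  fix i show "coeff (Qp p n) i = coeff (pCons (int (n mod p)) (Qp p (n div p))) i"
    using assms by (cases i) (simp_all add: coeff_Qp div_mult2_eq)
qed

lemma poly_Qp_div_mod:
  assumes "p \<ge> 2"
  shows "poly (Qp p n) x = int (n mod p) + x * poly (Qp p (n div p)) x"
  by (subst Qp_div_mod[OF assms]) simp

lemma Qp_mult_add:
  assumes "p \<ge> 2" "b < p"
  shows "Qp p (p * a + b) = pCons (int b) (Qp p a)"
  using assms by (subst Qp_div_mod) simp_all

lemma poly_Qp_mult_add: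
  assumes "p \<ge> 2" "b < p"
  shows "poly (Qp p (p * a + b)) x = int b + x * poly (Qp p a) x"
  by (simp add: Qp_mult_add[OF assms])

lemma poly_Qp_at_base:
  assumes "p \<ge> 2"
  shows "poly (Qp p n) (int p) = int n"
proof (induction n rule: less_induct)
  case (less n)
  show ?case
  proof (cases "n = 0")
    case False
    then have "n div p < n" using assms by simp
    have "poly (Qp p n) (int p) = int (n mod p) + int p * poly (Qp p (n div p)) (int p)"
      using assms by (rule poly_Qp_div_mod)
    also have "\<dots> = int (n mod p) + int p * int (n div p)" using less[OF \<open>n div p < n\<close>] by simp
    also have "\<dots> = int n" by (metis mod_mult_div_eq of_nat_add of_nat_mult)
    finally show ?thesis .
  qed simp
qed

lemma poly_Qp_nonneg:
  assumes "p \<ge> 2" "x \<ge> 0"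
  shows "poly (Qp p n) x \<ge> 0"
proof (induction n rule: less_induct)
  case (less n)
  show ?case
  proof (cases "n = 0")
    case False
    then have "n div p < n" using assms by simp
    then show ?thesis using less assms by (subst poly_Qp_div_mod) simp_all
  qed simp
qed

lemma Qp_Suc_not_dvd:
  assumes "p \<ge> 2" "\<not> p dvd Suc n"
  shows "Qp p (Suc n) = Qp p n + 1"
proof -
  have "n mod p \<noteq> p - 1"
  proof
    assume "n mod p = p - 1"
    then have "Suc n = p * Suc (n div p)"
      using mult_div_mod_eq[of p n] assms(1) by (simp add: algebra_simps)
    then show False using assms(2) by simp
  qed
  moreover have "n mod p < p" using assms(1) by simp
  ultimately have lt: "n mod p + 1 < p" by linarith
  have "Suc n = p * (n div p) + (n mod p + 1)" using mult_div_mod_eq[of p n] by simp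
  then have "Qp p (Suc n) = pCons (int (n mod p + 1)) (Qp p (n div p))"
    by (simp only:) (rule Qp_mult_add[OF assms(1) lt])
  then show ?thesis by (simp add: Qp_div_mod[OF assms(1), of n] one_pCons)
qed

lemma dvd_Suc_div_mod:
  assumes "p \<ge> 2" "p dvd Suc n"
  shows "Suc n mod p = 0" "n mod p = p - 1" "Suc n div p = Suc (n div p)" "n div p < n"
proof -
  show "Suc n mod p = 0" using assms(2) by simp
  then show "n mod p = p - 1" using assms(1) by (simp add: mod_Suc split: if_splits)
  then have "Suc n = p * Suc (n div p)"
    using mult_div_mod_eq[of p n] assms(1) by (simp add: algebra_simps)
  then show "Suc n div p = Suc (n div p)" using assms(1) by simp
  have "n \<noteq> 0" using assms by (cases n) (auto dest: dvd_imp_le)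
  then show "n div p < n" using assms(1) by simp
qed

lemma poly_Qp_Suc_dvd:
  assumes "p \<ge> 2" "p dvd Suc n"
  shows "poly (Qp p (Suc n)) x = x * poly (Qp p (Suc (n div p))) x"
    and "poly (Qp p n) x = int (p - 1) + x * poly (Qp p (n div p)) x"
  using poly_Qp_div_mod[OF assms(1), of "Suc n" x] poly_Qp_div_mod[OF assms(1), of n x]
    dvd_Suc_div_mod[OF assms] by simp_all

lemma poly_Qp_Suc_ge:
  assumes "p \<ge> 2" "x \<ge> int p"
  shows "poly (Qp p (Suc n)) x \<ge> poly (Qp p n) x + 1"
proof (induction n rule: less_induct)
  case (less n)
  show ?case
  proof (cases "p dvd Suc n")
    case False
    then show ?thesis by (simp add: Qp_Suc_not_dvd[OF assms(1)])
  next
    case True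
    have "poly (Qp p (n div p)) x + 1 \<le> poly (Qp p (Suc (n div p))) x"
      using less dvd_Suc_div_mod[OF assms(1) True] by blast
    then have "x * (poly (Qp p (n div p)) x + 1) \<le> poly (Qp p (Suc n)) x"
      using assms poly_Qp_Suc_dvd(1)[OF assms(1) True] by (simp add: mult_left_mono)
    then show ?thesis using assms poly_Qp_Suc_dvd(2)[OF assms(1) True] by (simp add: algebra_simps)
  qed
qed

lemma poly_Qp_mono:
  assumes "p \<ge> 2" "x \<ge> int p" "n \<le> m"
  shows "poly (Qp p n) x \<le> poly (Qp p m) x"
  using assms(3)
proof (induction m)
  case (Suc m)
  then show ?case using poly_Qp_Suc_ge[OF assms(1,2), of m] by (cases "n = Suc m") auto
qed simp

lemma digit_sum_Suc_le:
  assumes "p \<ge> 2"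
  shows "digit_sum p (Suc n) \<le> digit_sum p n + 1"
proof (induction n rule: less_induct)
  case (less n)
  show ?case
  proof (cases "p dvd Suc n")
    case False
    then show ?thesis by (simp add: Qp_Suc_not_dvd[OF assms(1)])
  next
    case True
    then show ?thesis
      using less dvd_Suc_div_mod[OF assms True] poly_Qp_Suc_dvd[OF assms True] by force
  qed
qed

lemma poly_Qp_add:
  assumes "p \<ge> 2"
  shows "poly (Qp p (a + b)) x =
    (if a mod p + b mod p < p
     then int (a mod p + b mod p) + x * poly (Qp p (a div p + b div p)) x
     else int (a mod p + b mod p) - int p + x * poly (Qp p (Suc (a div p + b div p))) x)"
proof (cases "a mod p + b mod p < p")
  case True
  have "a + b = p * (a div p + b div p) + (a mod p + b mod p)" by (simp add: algebra_simps)
  then have "poly (Qp p (a + b)) x = int (a mod p + b mod p) + x * poly (Qp p (a div p + b div p)) x"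
    by (simp only:) (rule poly_Qp_mult_add[OF assms True])
  with True show ?thesis by simp
next
  case False
  have r: "a mod p + b mod p - p < p"
    using assms mod_less_divisor[of p a] mod_less_divisor[of p b] by linarith
  have "a + b = p * (a div p + b div p) + (a mod p + b mod p)" by (simp add: algebra_simps)
  then have "a + b = p * Suc (a div p + b div p) + (a mod p + b mod p - p)"
    using False by simp
  then have "poly (Qp p (a + b)) x =
      int (a mod p + b mod p - p) + x * poly (Qp p (Suc (a div p + b div p))) x"
    by (simp only:) (rule poly_Qp_mult_add[OF assms r])
  with False show ?thesis by (simp add: of_nat_diff)
qed

lemma poly_Qp_add_ge:
  assumes "p \<ge> 2" "x \<ge> int p"
  shows "poly (Qp p a) x + poly (Qp p b) x \<le> poly (Qp p (a + b)) x"
proof (induction a arbitrary: b rule: less_induct)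
  case (less a)
  show ?case
  proof (cases "a = 0")
    case False
    then have "poly (Qp p (a div p)) x + poly (Qp p (b div p)) x \<le> poly (Qp p (a div p + b div p)) x"
      using less assms by simp
    then have "x * (poly (Qp p (a div p)) x + poly (Qp p (b div p)) x)
        \<le> x * poly (Qp p (a div p + b div p)) x"
      and "x * (poly (Qp p (a div p)) x + poly (Qp p (b div p)) x + 1)
        \<le> x * poly (Qp p (Suc (a div p + b div p))) x"
      using assms poly_Qp_Suc_ge[OF assms, of "a div p + b div p"] by (auto intro!: mult_left_mono)
    then show ?thesis
      using assms by (auto simp: poly_Qp_add[OF assms(1), of a b] poly_Qp_div_mod[OF assms(1), of a]
          poly_Qp_div_mod[OF assms(1), of b] algebra_simps)
  qed simp
qed

lemma digit_sum_add_le: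
  assumes "p \<ge> 2"
  shows "digit_sum p (a + b) \<le> digit_sum p a + digit_sum p b"
proof (induction a arbitrary: b rule: less_induct)
  case (less a)
  show ?case
  proof (cases "a = 0")
    case False
    then have "digit_sum p (a div p + b div p) \<le> digit_sum p (a div p) + digit_sum p (b div p)"
      using less assms by simp
    then show ?thesis
      using assms digit_sum_Suc_le[OF assms, of "a div p + b div p"]
      by (auto simp: poly_Qp_add[OF assms, of a b] poly_Qp_div_mod[OF assms, of a] poly_Qp_div_mod[OF assms, of b])
  qed simp
qed

text \<open>Equality of digit sums rules out carries, so the digits add coefficientwise.\<close>

lemma Qp_add_if_digit_sum_add:
  assumes "p \<ge> 2" "digit_sum p (a + b) = digit_sum p a + digit_sum p b"
  shows "Qp p (a + b) = Qp p a + Qp p b"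
  using assms(2)
proof (induction a arbitrary: b rule: less_induct)
  case (less a)
  show ?case
  proof (cases "a = 0")
    case False
    have Sa: "digit_sum p a = int (a mod p) + digit_sum p (a div p)"
      and Sb: "digit_sum p b = int (b mod p) + digit_sum p (b div p)"
      using poly_Qp_div_mod[OF assms(1), of a 1] poly_Qp_div_mod[OF assms(1), of b 1] by simp_all
    have no_carry: "a mod p + b mod p < p"
    proof (rule ccontr)
      assume carry: "\<not> ?thesis"
      have "digit_sum p (Suc (a div p + b div p)) \<le> digit_sum p (a div p) + digit_sum p (b div p) + 1"
        using digit_sum_Suc_le[OF assms(1)] digit_sum_add_le[OF assms(1)] by (meson add_right_mono order_trans)
      then show False
        using less.prems carry assms(1) Sa Sb poly_Qp_add[OF assms(1), of a b 1] by simp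
    qed
    have eq: "a + b = p * (a div p + b div p) + (a mod p + b mod p)" by (simp add: algebra_simps)
    have "digit_sum p (a div p + b div p) = digit_sum p (a div p) + digit_sum p (b div p)"
      using less.prems no_carry Sa Sb poly_Qp_add[OF assms(1), of a b 1] by simp
    then have "Qp p (a div p + b div p) = Qp p (a div p) + Qp p (b div p)"
      using less.IH False assms(1) by simp
    moreover have "Qp p (a + b) = pCons (int (a mod p + b mod p)) (Qp p (a div p + b div p))"
      unfolding eq by (rule Qp_mult_add[OF assms(1) no_carry])
    ultimately show ?thesis
      by (simp add: Qp_div_mod[OF assms(1), of a] Qp_div_mod[OF assms(1), of b])
  qed simp
qed

lemma poly_Qp_sum_ge:
  assumes "p \<ge> 2" "x \<ge> int p" "finite A"
  shows "(\<Sum>b\<in>A. poly (Qp p (f b)) x) \<le> poly (Qp p (\<Sum>b\<in>A. f b)) x"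
  using assms(3)
proof (induction A rule: finite_induct)
  case (insert a A)
  then show ?case using poly_Qp_add_ge[OF assms(1,2), of "f a" "\<Sum>b\<in>A. f b"] by simp
qed simp

lemma poly_Qp_mult_ge:
  assumes "p \<ge> 2" "x \<ge> int p"
  shows "int k * poly (Qp p a) x \<le> poly (Qp p (k * a)) x"
proof (induction k)
  case (Suc k)
  then show ?case using poly_Qp_add_ge[OF assms, of a "k * a"] by (simp add: algebra_simps)
qed simp

lemma digit_sum_sum_le:
  assumes "p \<ge> 2" "finite A"
  shows "digit_sum p (\<Sum>b\<in>A. f b) \<le> (\<Sum>b\<in>A. digit_sum p (f b))"
  using assms(2)
proof (induction A rule: finite_induct)
  case (insert a A)
  then show ?case using digit_sum_add_le[OF assms(1), of "f a" "\<Sum>b\<in>A. f b"] by simp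
qed simp

lemma Qp_sum_if_digit_sum_sum:
  assumes "p \<ge> 2" "finite A" "digit_sum p (\<Sum>b\<in>A. f b) = (\<Sum>b\<in>A. digit_sum p (f b))"
  shows "Qp p (\<Sum>b\<in>A. f b) = (\<Sum>b\<in>A. Qp p (f b))"
  using assms(2,3)
proof (induction A rule: finite_induct)
  case (insert a A)
  have "digit_sum p (f a + (\<Sum>b\<in>A. f b)) \<le> digit_sum p (f a) + digit_sum p (\<Sum>b\<in>A. f b)"
    and "digit_sum p (\<Sum>b\<in>A. f b) \<le> (\<Sum>b\<in>A. digit_sum p (f b))"
    using digit_sum_add_le digit_sum_sum_le assms(1) insert.hyps by blast+
  then have head: "digit_sum p (f a + (\<Sum>b\<in>A. f b)) = digit_sum p (f a) + digit_sum p (\<Sum>b\<in>A. f b)"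
    and tail: "digit_sum p (\<Sum>b\<in>A. f b) = (\<Sum>b\<in>A. digit_sum p (f b))"
    using insert.prems insert.hyps by simp_all
  then show ?case
    using insert.IH[OF tail] insert.hyps Qp_add_if_digit_sum_add[OF assms(1) head] by simp
qed simp

lemma poly_Qp_pow_mult_add:
  assumes "p \<ge> 2" "b < p ^ k"
  shows "poly (Qp p (p ^ k * a + b)) x = x ^ k * poly (Qp p a) x + poly (Qp p b) x"
  using assms(2)
proof (induction k arbitrary: b)
  case (Suc k)
  have bd: "b div p < p ^ k" using Suc.prems assms
    by (simp add: div_less_iff_less_mult mult.commute)
  have "p ^ Suc k * a + b = p * (p ^ k * a + b div p) + b mod p"
    by (simp add: algebra_simps mult_div_mod_eq)
  then have "poly (Qp p (p ^ Suc k * a + b)) x = int (b mod p) + x * poly (Qp p (p ^ k * a + b div p)) x"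
    using assms(1) by (simp only:) (rule poly_Qp_mult_add, simp_all)
  also have "\<dots> = x ^ Suc k * poly (Qp p a) x + (int (b mod p) + x * poly (Qp p (b div p)) x)"
    using Suc.IH[OF bd] by (simp add: algebra_simps)
  also have "int (b mod p) + x * poly (Qp p (b div p)) x = poly (Qp p b) x"
    by (rule poly_Qp_div_mod[OF assms(1), symmetric])
  finally show ?case .
qed simp

lemma poly_Qp_pow_mult:
  assumes "p \<ge> 2"
  shows "poly (Qp p (p ^ k * a)) x = x ^ k * poly (Qp p a) x"
  using poly_Qp_pow_mult_add[OF assms, of 0 k a x] assms by simp

lemma poly_Qp_less_power:
  assumes "p \<ge> 2" "x \<ge> int p" "b < p ^ k"
  shows "poly (Qp p b) x < x ^ k"
  using assms(3)
proof (induction k arbitrary: b)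
  case (Suc k)
  have "b div p < p ^ k" using Suc.prems assms
    by (simp add: div_less_iff_less_mult mult.commute)
  then have "x * poly (Qp p (b div p)) x \<le> x * (x ^ k - 1)"
    using Suc.IH assms by (intro mult_left_mono) auto
  moreover have "int (b mod p) < x" using assms mod_less_divisor[of p b] by linarith
  ultimately show ?case by (simp add: poly_Qp_div_mod[OF assms(1), of b] algebra_simps)
qed simp

lemma digit_sum_pow_minus_one:
  assumes "p \<ge> 2"
  shows "digit_sum p (p ^ k - 1) = int (p - 1) * int k"
proof (induction k)
  case (Suc k)
  have "p ^ Suc k - 1 = p * (p ^ k - 1) + (p - 1)"
    using assms by (simp add: algebra_simps diff_mult_distrib2)
  then have "digit_sum p (p ^ Suc k - 1) = int (p - 1) + digit_sum p (p ^ k - 1)"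
    using assms by (simp only:) (subst poly_Qp_mult_add, simp_all)
  then show ?case using Suc.IH by (simp add: algebra_simps)
qed simp

lemma digit_sum_Suc_multiplicity:
  assumes "prime p"
  shows "digit_sum p (Suc n) + int (p - 1) * int (multiplicity p (Suc n)) = digit_sum p n + 1"
proof (induction n rule: less_induct)
  case (less n)
  have p2: "p \<ge> 2" using assms by (rule prime_ge_2_nat)
  show ?case
  proof (cases "p dvd Suc n")
    case False
    then show ?thesis by (simp add: Qp_Suc_not_dvd[OF p2] not_dvd_imp_multiplicity_0)
  next
    case True
    note d = dvd_Suc_div_mod[OF p2 True]
    have "Suc n = p * Suc (n div p)" using d(3) True by (metis dvd_mult_div_cancel)
    then have "multiplicity p (Suc n) = Suc (multiplicity p (Suc (n div p)))"
      using p2 by (simp only:) (rule multiplicity_times_same, simp_all)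
    then show ?thesis
      using less[OF d(4)] poly_Qp_Suc_dvd[OF p2 True] by (simp add: algebra_simps)
  qed
qed

lemma legendre_digit_sum:
  assumes "prime p"
  shows "int (p - 1) * int (multiplicity p (fact n)) + digit_sum p n = int n"
proof (induction n)
  case (Suc n)
  have "fact (Suc n) = Suc n * (fact n :: nat)" by simp
  then have "multiplicity p (fact (Suc n) :: nat) = multiplicity p (Suc n) + multiplicity p (fact n :: nat)"
    using assms by (simp only:) (rule prime_elem_multiplicity_mult_distrib, simp_all)
  then show ?case using Suc.IH digit_sum_Suc_multiplicity[OF assms, of n] by (simp add: algebra_simps)
qed simp

section \<open>The \<open>p\<close>-adic order of \<open>p\<^sup>s((\<nu>))/|\<nu>|\<close>\<close>

lemma multiplicity_of_nat: "multiplicity (int p) (int n) = multiplicity p n"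
  by (simp add: multiplicity_def flip: of_nat_power)

lemma ord_rat_of_nat_div:
  assumes "prime p" "a \<noteq> 0" "b \<noteq> 0"
  shows "ord_rat p (of_nat a / of_nat b) = int (multiplicity p a) - int (multiplicity p b)"
proof -
  obtain n d where nd: "quotient_of (of_nat a / of_nat b) = (n, d)"
    by (cases "quotient_of (of_nat a / of_nat b :: rat)") auto
  have d0: "d > 0" using nd by (rule quotient_of_denom_pos)
  have "(of_nat a / of_nat b :: rat) = of_int n / of_int d" using nd by (rule quotient_of_div)
  then have "(of_int (int a * d) :: rat) = of_int (n * int b)"
    using assms d0 by (simp add: frac_eq_eq)
  then have "int a * d = n * int b" by (simp only: of_int_eq_iff)
  moreover have "n \<noteq> 0" using \<open>int a * d = n * int b\<close> assms d0 by auto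
  moreover have "prime_elem (int p)" using assms(1) by simp
  ultimately have "multiplicity (int p) (int a) + multiplicity (int p) d
      = multiplicity (int p) n + multiplicity (int p) (int b)"
    using assms d0 by (metis prime_elem_multiplicity_mult_distrib of_nat_eq_0_iff less_irrefl)
  then show ?thesis unfolding ord_rat_def nd multiplicity_of_nat by simp
qed

text \<open>The factor \<open>1/|\<nu>|\<close> contributes \<open>(p - 1) ord\<^sub>p |\<nu>| = s\<^sub>p(|\<nu>| - 1) + 1 - s\<^sub>p(|\<nu>|)\<close>.\<close>

lemma ord_multinom_digit_sum:
  assumes pp: "prime p" and fin: "finite (supp \<nu>)" and n0: "nu_size \<nu> \<noteq> 0"
  shows "int (p - 1) * ord_rat p (of_nat (p ^ s) * multinom \<nu> / of_nat (nu_size \<nu>)) =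
         int (p - 1) * int s + (\<Sum>\<beta>\<in>supp \<nu>. digit_sum p (\<nu> \<beta>))
         - digit_sum p (nu_size \<nu> - 1) - 1"
proof -
  define n where "n = nu_size \<nu>"
  define F where "F = supp \<nu>"
  define v where "v m = int (p - 1) * int (multiplicity p m)" for m :: nat
  define A where "A = p ^ s * fact n"
  define B where "B = (\<Prod>\<beta>\<in>F. fact (\<nu> \<beta>)) * n"
  have pe: "prime_elem p" using pp by simp
  have fact0: "(\<Prod>\<beta>\<in>F. fact (\<nu> \<beta>) :: nat) \<noteq> 0" by (simp add: F_def fin)
  have "(of_nat (p ^ s) * multinom \<nu> / of_nat n :: rat) = of_nat A / of_nat B"
    unfolding multinom_def n_def F_def A_def B_def by simp
  moreover have "A \<noteq> 0" "B \<noteq> 0"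
    using pp fact0 n0 unfolding A_def B_def n_def by (simp_all add: prime_gt_0_nat)
  moreover have "multiplicity p A = s + multiplicity p (fact n :: nat)"
    using pe pp unfolding A_def
    by (simp add: prime_elem_multiplicity_mult_distrib prime_gt_0_nat multiplicity_prime_power)
  moreover have "multiplicity p B = (\<Sum>\<beta>\<in>F. multiplicity p (fact (\<nu> \<beta>) :: nat)) + multiplicity p n"
  proof -
    have "multiplicity p (\<Prod>\<beta>\<in>F. fact (\<nu> \<beta>) :: nat) = (\<Sum>\<beta>\<in>F. multiplicity p (fact (\<nu> \<beta>) :: nat))"
      by (rule prime_elem_multiplicity_prod_distrib[OF pe]) (auto simp: F_def fin)
    then show ?thesis
      using pe fact0 n0 unfolding B_def n_def by (simp add: prime_elem_multiplicity_mult_distrib)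
  qed
  ultimately have ord: "ord_rat p (of_nat (p ^ s) * multinom \<nu> / of_nat n) =
      int s + int (multiplicity p (fact n :: nat))
      - (\<Sum>\<beta>\<in>F. int (multiplicity p (fact (\<nu> \<beta>) :: nat))) - int (multiplicity p n)"
    using ord_rat_of_nat_div[OF pp] by simp
  have "int (p - 1) * ord_rat p (of_nat (p ^ s) * multinom \<nu> / of_nat n) =
      int (p - 1) * int s + v (fact n) - (\<Sum>\<beta>\<in>F. v (fact (\<nu> \<beta>))) - v n"
    unfolding ord v_def by (simp add: right_diff_distrib distrib_left sum_distrib_left)
  also have "\<dots> = int (p - 1) * int s + (\<Sum>\<beta>\<in>F. digit_sum p (\<nu> \<beta>)) - digit_sum p (n - 1) - 1"
  proof -
    have "v (fact m) = int m - digit_sum p m" for m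
      using legendre_digit_sum[OF pp, of m] unfolding v_def by simp
    moreover have "v n = digit_sum p (n - 1) + 1 - digit_sum p n"
      using digit_sum_Suc_multiplicity[OF pp, of "n - 1"] n0 unfolding v_def n_def by simp
    moreover have "int n = (\<Sum>\<beta>\<in>F. int (\<nu> \<beta>))" unfolding n_def nu_size_def F_def by simp
    ultimately show ?thesis by (simp add: sum_subtractf)
  qed
  finally show ?thesis unfolding n_def F_def .
qed

lemma ord_multinom_eq_0_iff:
  assumes "prime p" and "finite (supp \<nu>)" and "nu_size \<nu> \<noteq> 0"
  shows "ord_rat p (of_nat (p ^ s) * multinom \<nu> / of_nat (nu_size \<nu>)) = 0 \<longleftrightarrow>
    digit_sum p (nu_size \<nu> - 1) + 1 = (\<Sum>\<beta>\<in>supp \<nu>. digit_sum p (\<nu> \<beta>)) + int (p - 1) * int s"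
proof -
  have "int (p - 1) \<noteq> 0" using prime_ge_2_nat[OF assms(1)] by simp
  then have "ord_rat p (of_nat (p ^ s) * multinom \<nu> / of_nat (nu_size \<nu>)) = 0 \<longleftrightarrow>
      int (p - 1) * ord_rat p (of_nat (p ^ s) * multinom \<nu> / of_nat (nu_size \<nu>)) = 0"
    by simp
  then show ?thesis unfolding ord_multinom_digit_sum[OF assms] by linarith
qed

section \<open>Necessity\<close>

lemma digit_sum_pred_sum_le:
  assumes "p \<ge> 2" "finite F" "\<beta>0 \<in> F" "\<not> p dvd \<mu> \<beta>0"
  shows "digit_sum p ((\<Sum>\<beta>\<in>F. \<mu> \<beta>) - 1) + 1 \<le> (\<Sum>\<beta>\<in>F. digit_sum p (\<mu> \<beta>))"
proof -
  obtain k where k: "\<mu> \<beta>0 = Suc k" using assms(4) by (cases "\<mu> \<beta>0") auto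
  define \<sigma> where "\<sigma> = (\<Sum>\<beta>\<in>F - {\<beta>0}. \<mu> \<beta>)"
  have "(\<Sum>\<beta>\<in>F. \<mu> \<beta>) - 1 = k + \<sigma>"
    using assms(2,3) k unfolding \<sigma>_def by (simp add: sum.remove)
  moreover have "digit_sum p (k + \<sigma>) \<le> digit_sum p k + (\<Sum>\<beta>\<in>F - {\<beta>0}. digit_sum p (\<mu> \<beta>))"
    using digit_sum_add_le[OF assms(1), of k \<sigma>] digit_sum_sum_le[OF assms(1), of "F - {\<beta>0}" \<mu>]
      assms(2) unfolding \<sigma>_def by simp
  moreover have "digit_sum p (\<mu> \<beta>0) = digit_sum p k + 1"
    using Qp_Suc_not_dvd[OF assms(1)] assms(4) k by simp
  ultimately show ?thesis using assms(2,3) by (simp add: sum.remove)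
qed

lemma Qp_pred_sum_if_digit_sum_eq:
  assumes "p \<ge> 2" "finite F" "\<beta>0 \<in> F" "\<not> p dvd \<mu> \<beta>0"
    and "digit_sum p ((\<Sum>\<beta>\<in>F. \<mu> \<beta>) - 1) + 1 = (\<Sum>\<beta>\<in>F. digit_sum p (\<mu> \<beta>))"
  shows "Qp p ((\<Sum>\<beta>\<in>F. \<mu> \<beta>) - 1) + 1 = (\<Sum>\<beta>\<in>F. Qp p (\<mu> \<beta>))"
proof -
  obtain k where k: "\<mu> \<beta>0 = Suc k" using assms(4) by (cases "\<mu> \<beta>0") auto
  define \<sigma> where "\<sigma> = (\<Sum>\<beta>\<in>F - {\<beta>0}. \<mu> \<beta>)"
  have pred: "(\<Sum>\<beta>\<in>F. \<mu> \<beta>) - 1 = k + \<sigma>"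
    using assms(2,3) k unfolding \<sigma>_def by (simp add: sum.remove)
  have Qk: "Qp p (\<mu> \<beta>0) = Qp p k + 1"
    using Qp_Suc_not_dvd[OF assms(1)] assms(4) k by simp
  have "digit_sum p (k + \<sigma>) \<le> digit_sum p k + digit_sum p \<sigma>"
    by (rule digit_sum_add_le[OF assms(1)])
  moreover have "digit_sum p \<sigma> \<le> (\<Sum>\<beta>\<in>F - {\<beta>0}. digit_sum p (\<mu> \<beta>))"
    unfolding \<sigma>_def using assms(2) by (intro digit_sum_sum_le[OF assms(1)]) simp
  moreover have "digit_sum p (k + \<sigma>) + 1 = digit_sum p k + 1 + (\<Sum>\<beta>\<in>F - {\<beta>0}. digit_sum p (\<mu> \<beta>))"
    using assms(2,3,5) pred Qk by (simp add: sum.remove)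
  ultimately have add_eq: "digit_sum p (k + \<sigma>) = digit_sum p k + digit_sum p \<sigma>"
    and sum_eq: "digit_sum p (\<Sum>\<beta>\<in>F - {\<beta>0}. \<mu> \<beta>) = (\<Sum>\<beta>\<in>F - {\<beta>0}. digit_sum p (\<mu> \<beta>))"
    unfolding \<sigma>_def by simp_all
  have "Qp p (k + \<sigma>) = Qp p k + Qp p \<sigma>"
    by (rule Qp_add_if_digit_sum_add[OF assms(1) add_eq])
  moreover have "Qp p \<sigma> = (\<Sum>\<beta>\<in>F - {\<beta>0}. Qp p (\<mu> \<beta>))"
    unfolding \<sigma>_def using assms(2) sum_eq by (intro Qp_sum_if_digit_sum_sum[OF assms(1)]) simp_all
  ultimately have "Qp p (k + \<sigma>) = Qp p k + (\<Sum>\<beta>\<in>F - {\<beta>0}. Qp p (\<mu> \<beta>))" by simp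
  then show ?thesis using assms(2,3) pred Qk by (simp add: sum.remove algebra_simps)
qed

lemma digit_sum_pow_mult_pred:
  assumes "p \<ge> 2" "n \<ge> 1"
  shows "digit_sum p (p ^ m * n - 1) = digit_sum p (n - 1) + int (p - 1) * int m"
proof -
  have "p ^ m * n - 1 = p ^ m * (n - 1) + (p ^ m - 1)"
    using assms by (simp add: algebra_simps diff_mult_distrib2)
  then show ?thesis
    using poly_Qp_pow_mult_add[OF assms(1), of "p ^ m - 1" m "n - 1" 1] assms(1)
      digit_sum_pow_minus_one[OF assms(1), of m] by simp
qed

lemma poly_Qp_pow_mult_pred_less:
  assumes "p \<ge> 2" "x \<ge> int p" "n \<ge> 1"
  shows "poly (Qp p (p ^ m * n - 1)) x < x ^ m * (poly (Qp p (n - 1)) x + 1)"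
proof -
  have "p ^ m * n - 1 = p ^ m * (n - 1) + (p ^ m - 1)"
    using assms by (simp add: algebra_simps diff_mult_distrib2)
  moreover have "poly (Qp p (p ^ m - 1)) x < x ^ m"
    using assms by (intro poly_Qp_less_power) auto
  ultimately show ?thesis
    using poly_Qp_pow_mult_add[OF assms(1), of "p ^ m - 1" m "n - 1" x] assms(1)
    by (simp add: algebra_simps)
qed

lemma pow_dvd_cofactors:
  fixes \<nu> :: "'a \<Rightarrow> nat"
  assumes "\<forall>\<beta>\<in>F. p ^ m dvd \<nu> \<beta>" "\<not> p ^ Suc m dvd \<nu> \<beta>0" "\<beta>0 \<in> F"
  obtains \<mu> where "\<forall>\<beta>\<in>F. \<nu> \<beta> = p ^ m * \<mu> \<beta>" "\<not> p dvd \<mu> \<beta>0"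
proof
  show "\<forall>\<beta>\<in>F. \<nu> \<beta> = p ^ m * (\<nu> \<beta> div p ^ m)" using assms(1) by simp
  show "\<not> p dvd \<nu> \<beta>0 div p ^ m"
  proof
    assume "p dvd \<nu> \<beta>0 div p ^ m"
    then have "p ^ m * p dvd p ^ m * (\<nu> \<beta>0 div p ^ m)" by simp
    then show False using assms by (simp add: mult.commute)
  qed
qed

lemma digit_sum_pred_sum_le_pow:
  assumes p2: "p \<ge> 2" and fin: "finite F" and "\<beta>0 \<in> F"
    and dvd: "\<forall>\<beta>\<in>F. p ^ m dvd \<nu> \<beta>" and ndvd: "\<not> p ^ Suc m dvd \<nu> \<beta>0"
  shows "digit_sum p ((\<Sum>\<beta>\<in>F. \<nu> \<beta>) - 1) + 1 \<le> (\<Sum>\<beta>\<in>F. digit_sum p (\<nu> \<beta>)) + int (p - 1) * int m"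
proof -
  obtain \<mu> where \<mu>: "\<forall>\<beta>\<in>F. \<nu> \<beta> = p ^ m * \<mu> \<beta>" and "\<not> p dvd \<mu> \<beta>0"
    using pow_dvd_cofactors[OF dvd ndvd \<open>\<beta>0 \<in> F\<close>] by blast
  have "\<mu> \<beta>0 \<le> (\<Sum>\<beta>\<in>F. \<mu> \<beta>)" using fin \<open>\<beta>0 \<in> F\<close> by (intro member_le_sum) auto
  then have pos: "(\<Sum>\<beta>\<in>F. \<mu> \<beta>) \<ge> 1" using \<open>\<not> p dvd \<mu> \<beta>0\<close> by (cases "\<mu> \<beta>0") auto
  have "(\<Sum>\<beta>\<in>F. \<nu> \<beta>) = p ^ m * (\<Sum>\<beta>\<in>F. \<mu> \<beta>)"
    using \<mu> by (simp add: sum_distrib_left)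
  moreover have "(\<Sum>\<beta>\<in>F. digit_sum p (\<nu> \<beta>)) = (\<Sum>\<beta>\<in>F. digit_sum p (\<mu> \<beta>))"
    using \<mu> poly_Qp_pow_mult[OF p2] by (intro sum.cong) auto
  ultimately show ?thesis
    using digit_sum_pow_mult_pred[OF p2 pos, of m]
      digit_sum_pred_sum_le[where \<mu> = \<mu>, OF p2 fin \<open>\<beta>0 \<in> F\<close> \<open>\<not> p dvd \<mu> \<beta>0\<close>] by simp
qed

lemma poly_Qp_pred_sum_less_pow:
  assumes p2: "p \<ge> 2" and x: "x \<ge> int p" and fin: "finite F" and "\<beta>0 \<in> F"
    and dvd: "\<forall>\<beta>\<in>F. p ^ m dvd \<nu> \<beta>" and ndvd: "\<not> p ^ Suc m dvd \<nu> \<beta>0"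
    and eq: "digit_sum p ((\<Sum>\<beta>\<in>F. \<nu> \<beta>) - 1) + 1 = (\<Sum>\<beta>\<in>F. digit_sum p (\<nu> \<beta>)) + int (p - 1) * int m"
  shows "poly (Qp p ((\<Sum>\<beta>\<in>F. \<nu> \<beta>) - 1)) x < (\<Sum>\<beta>\<in>F. poly (Qp p (\<nu> \<beta>)) x)"
proof -
  obtain \<mu> where \<mu>: "\<forall>\<beta>\<in>F. \<nu> \<beta> = p ^ m * \<mu> \<beta>" and "\<not> p dvd \<mu> \<beta>0"
    using pow_dvd_cofactors[OF dvd ndvd \<open>\<beta>0 \<in> F\<close>] by blast
  have "\<mu> \<beta>0 \<le> (\<Sum>\<beta>\<in>F. \<mu> \<beta>)" using fin \<open>\<beta>0 \<in> F\<close> by (intro member_le_sum) auto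
  then have pos: "(\<Sum>\<beta>\<in>F. \<mu> \<beta>) \<ge> 1" using \<open>\<not> p dvd \<mu> \<beta>0\<close> by (cases "\<mu> \<beta>0") auto
  have sum\<nu>: "(\<Sum>\<beta>\<in>F. \<nu> \<beta>) = p ^ m * (\<Sum>\<beta>\<in>F. \<mu> \<beta>)"
    using \<mu> by (simp add: sum_distrib_left)
  have poly\<nu>: "(\<Sum>\<beta>\<in>F. poly (Qp p (\<nu> \<beta>)) y) = y ^ m * (\<Sum>\<beta>\<in>F. poly (Qp p (\<mu> \<beta>)) y)" for y
    using \<mu> poly_Qp_pow_mult[OF p2] by (simp add: sum_distrib_left)
  have "digit_sum p ((\<Sum>\<beta>\<in>F. \<mu> \<beta>) - 1) + 1 = (\<Sum>\<beta>\<in>F. digit_sum p (\<mu> \<beta>))"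
    using eq sum\<nu> poly\<nu>[of 1] digit_sum_pow_mult_pred[OF p2 pos, of m] by simp
  then have "Qp p ((\<Sum>\<beta>\<in>F. \<mu> \<beta>) - 1) + 1 = (\<Sum>\<beta>\<in>F. Qp p (\<mu> \<beta>))"
    by (rule Qp_pred_sum_if_digit_sum_eq[where \<mu> = \<mu>, OF p2 fin \<open>\<beta>0 \<in> F\<close> \<open>\<not> p dvd \<mu> \<beta>0\<close>])
  then have "poly (Qp p ((\<Sum>\<beta>\<in>F. \<mu> \<beta>) - 1)) x + 1 = (\<Sum>\<beta>\<in>F. poly (Qp p (\<mu> \<beta>)) x)"
    by (metis poly_1 poly_add poly_sum)
  then show ?thesis
    using poly_Qp_pow_mult_pred_less[OF p2 x pos, of m] sum\<nu> poly\<nu>[of x] by simp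
qed

lemma S_set_min_multiplicity:
  assumes p2: "p \<ge> 2" and \<nu>: "\<nu> \<in> S_set r \<alpha> d" and \<alpha>: "nonzero_vec r \<alpha>"
  obtains m \<beta>0 where "m \<le> multiplicity p (Gcd (set \<alpha>))" "\<beta>0 \<in> supp \<nu>"
    "\<forall>\<beta>\<in>supp \<nu>. p ^ m dvd \<nu> \<beta>" "\<not> p ^ Suc m dvd \<nu> \<beta>0"
proof -
  have fin: "finite (supp \<nu>)"
    and sums: "\<forall>i<r. (\<Sum>\<beta>\<in>supp \<nu>. \<nu> \<beta> * \<beta> ! i) = \<alpha> ! i"
    using \<nu> unfolding S_set_def by auto
  obtain i0 where i0: "i0 < r" "\<alpha> ! i0 \<noteq> 0" and len: "length \<alpha> = r"
    using \<alpha> unfolding nonzero_vec_def by blast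
  have ne: "supp \<nu> \<noteq> {}" using sums i0 by fastforce
  define m where "m = Min ((\<lambda>\<beta>. multiplicity p (\<nu> \<beta>)) ` supp \<nu>)"
  have "m \<in> (\<lambda>\<beta>. multiplicity p (\<nu> \<beta>)) ` supp \<nu>"
    unfolding m_def using fin ne by (intro Min_in) auto
  then obtain \<beta>0 where \<beta>0: "\<beta>0 \<in> supp \<nu>" "multiplicity p (\<nu> \<beta>0) = m" by auto
  have dvd: "\<forall>\<beta>\<in>supp \<nu>. p ^ m dvd \<nu> \<beta>"
    using fin unfolding m_def by (auto intro: multiplicity_dvd' Min_le)
  have not_unit: "\<not> is_unit p" using p2 by simp
  have "\<not> p ^ Suc m dvd \<nu> \<beta>0"
  proof
    assume "p ^ Suc m dvd \<nu> \<beta>0"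
    then have "Suc m \<le> multiplicity p (\<nu> \<beta>0)"
      using \<beta>0(1) not_unit by (intro multiplicity_geI) (auto simp: supp_def)
    then show False using \<beta>0(2) by simp
  qed
  moreover have "m \<le> multiplicity p (Gcd (set \<alpha>))"
  proof (rule multiplicity_geI)
    show "p ^ m dvd Gcd (set \<alpha>)"
    proof (rule Gcd_greatest)
      fix b assume "b \<in> set \<alpha>"
      then obtain i where "i < r" "\<alpha> ! i = b" using len by (auto simp: in_set_conv_nth)
      moreover have "p ^ m dvd (\<Sum>\<beta>\<in>supp \<nu>. \<nu> \<beta> * \<beta> ! i)"
        using dvd by (intro dvd_sum dvd_mult2) auto
      ultimately show "p ^ m dvd b" using sums by simp
    qed
    have "\<alpha> ! i0 \<in> set \<alpha>" using i0 len by simp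
    then show "Gcd (set \<alpha>) \<noteq> 0" using i0 by (auto simp: Gcd_0_iff)
  qed (rule not_unit)
  ultimately show ?thesis using that \<beta>0(1) dvd by blast
qed

lemma S_set_sum_poly_Qp_le:
  assumes p2: "p \<ge> 2" and x: "x \<ge> int p" and \<nu>: "\<nu> \<in> S_set r \<alpha> d" and len: "length \<alpha> = r"
  shows "(\<Sum>\<beta>\<in>supp \<nu>. poly (Qp p (\<nu> \<beta>)) x) \<le> poly (Qp_vec p \<alpha>) x"
proof -
  have fin: "finite (supp \<nu>)" and nz: "\<forall>\<beta>\<in>supp \<nu>. nonzero_vec r \<beta>"
    and sums: "\<forall>i<r. (\<Sum>\<beta>\<in>supp \<nu>. \<nu> \<beta> * \<beta> ! i) = \<alpha> ! i"
    using \<nu> unfolding S_set_def by auto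
  have "(\<Sum>\<beta>\<in>supp \<nu>. poly (Qp p (\<nu> \<beta>)) x)
      \<le> (\<Sum>\<beta>\<in>supp \<nu>. (\<Sum>i<r. int (\<beta> ! i)) * poly (Qp p (\<nu> \<beta>)) x)"
  proof (rule sum_mono)
    fix \<beta> assume "\<beta> \<in> supp \<nu>"
    then obtain i where i: "i < r" "\<beta> ! i \<noteq> 0" using nz unfolding nonzero_vec_def by blast
    have "int (\<beta> ! i) \<le> (\<Sum>i<r. int (\<beta> ! i))" using i by (intro member_le_sum) auto
    then have "1 \<le> (\<Sum>i<r. int (\<beta> ! i))" using i by linarith
    moreover have "poly (Qp p (\<nu> \<beta>)) x \<ge> 0" using p2 x by (intro poly_Qp_nonneg) auto
    ultimately show "poly (Qp p (\<nu> \<beta>)) x \<le> (\<Sum>i<r. int (\<beta> ! i)) * poly (Qp p (\<nu> \<beta>)) x"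
      using mult_right_mono by fastforce
  qed
  also have "\<dots> = (\<Sum>i<r. \<Sum>\<beta>\<in>supp \<nu>. int (\<beta> ! i) * poly (Qp p (\<nu> \<beta>)) x)"
    by (simp add: sum_distrib_right sum.swap[of _ "supp \<nu>"])
  also have "\<dots> \<le> (\<Sum>i<r. \<Sum>\<beta>\<in>supp \<nu>. poly (Qp p (\<beta> ! i * \<nu> \<beta>)) x)"
    by (intro sum_mono poly_Qp_mult_ge[OF p2 x])
  also have "\<dots> \<le> (\<Sum>i<r. poly (Qp p (\<Sum>\<beta>\<in>supp \<nu>. \<beta> ! i * \<nu> \<beta>)) x)"
    by (intro sum_mono poly_Qp_sum_ge[OF p2 x fin])
  also have "\<dots> = poly (Qp_vec p \<alpha>) x"
    using sums len unfolding Qp_vec_def by (simp add: poly_sum mult.commute)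
  finally show ?thesis .
qed

lemma S_set_digit_sum_bound:
  assumes p2: "p \<ge> 2" and \<nu>: "\<nu> \<in> S_set r \<alpha> d" and \<alpha>: "nonzero_vec r \<alpha>"
  shows "digit_sum p (nu_size \<nu> - 1) + 1
    \<le> (\<Sum>\<beta>\<in>supp \<nu>. digit_sum p (\<nu> \<beta>)) + int (p - 1) * int (multiplicity p (Gcd (set \<alpha>)))"
proof -
  obtain m \<beta>0 where m: "m \<le> multiplicity p (Gcd (set \<alpha>))" and "\<beta>0 \<in> supp \<nu>"
    "\<forall>\<beta>\<in>supp \<nu>. p ^ m dvd \<nu> \<beta>" "\<not> p ^ Suc m dvd \<nu> \<beta>0"
    using S_set_min_multiplicity[OF p2 \<nu> \<alpha>] by blast
  moreover have "finite (supp \<nu>)" using \<nu> unfolding S_set_def by simp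
  ultimately have "digit_sum p (nu_size \<nu> - 1) + 1 \<le> (\<Sum>\<beta>\<in>supp \<nu>. digit_sum p (\<nu> \<beta>)) + int (p - 1) * int m"
    unfolding nu_size_def using p2 by (intro digit_sum_pred_sum_le_pow)
  moreover have "int (p - 1) * int m \<le> int (p - 1) * int (multiplicity p (Gcd (set \<alpha>)))"
    using m by (intro mult_left_mono) auto
  ultimately show ?thesis by linarith
qed

lemma S_set_poly_gt_if_digit_sum_eq:
  assumes p2: "p \<ge> 2" and \<nu>: "\<nu> \<in> S_set r \<alpha> d" and \<alpha>: "nonzero_vec r \<alpha>"
    and eq: "digit_sum p (nu_size \<nu> - 1) + 1
      = (\<Sum>\<beta>\<in>supp \<nu>. digit_sum p (\<nu> \<beta>)) + int (p - 1) * int (multiplicity p (Gcd (set \<alpha>)))"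
  shows "poly_gt (Qp_vec p \<alpha>) (Qp p d)"
proof -
  obtain m \<beta>0 where m: "m \<le> multiplicity p (Gcd (set \<alpha>))" and "\<beta>0 \<in> supp \<nu>"
    "\<forall>\<beta>\<in>supp \<nu>. p ^ m dvd \<nu> \<beta>" "\<not> p ^ Suc m dvd \<nu> \<beta>0"
    using S_set_min_multiplicity[OF p2 \<nu> \<alpha>] by blast
  moreover have fin: "finite (supp \<nu>)" and d: "d < nu_size \<nu>" using \<nu> unfolding S_set_def by auto
  ultimately have le_m: "digit_sum p (nu_size \<nu> - 1) + 1 \<le> (\<Sum>\<beta>\<in>supp \<nu>. digit_sum p (\<nu> \<beta>)) + int (p - 1) * int m"
    unfolding nu_size_def using p2 by (intro digit_sum_pred_sum_le_pow)
  have "int (p - 1) * int m \<le> int (p - 1) * int (multiplicity p (Gcd (set \<alpha>)))"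
    using m by (intro mult_left_mono) auto
  then have eq_m: "digit_sum p ((\<Sum>\<beta>\<in>supp \<nu>. \<nu> \<beta>) - 1) + 1
      = (\<Sum>\<beta>\<in>supp \<nu>. digit_sum p (\<nu> \<beta>)) + int (p - 1) * int m"
    using eq le_m unfolding nu_size_def by linarith
  have "poly (Qp p d) x < poly (Qp_vec p \<alpha>) x" if x: "x \<ge> int p" for x
  proof -
    have "poly (Qp p d) x \<le> poly (Qp p (nu_size \<nu> - 1)) x"
      using d by (intro poly_Qp_mono[OF p2 x]) simp
    also have "\<dots> < (\<Sum>\<beta>\<in>supp \<nu>. poly (Qp p (\<nu> \<beta>)) x)"
      unfolding nu_size_def by (rule poly_Qp_pred_sum_less_pow[OF p2 x fin \<open>\<beta>0 \<in> supp \<nu>\<close> _ _ eq_m])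
        (use \<open>\<forall>\<beta>\<in>supp \<nu>. p ^ m dvd \<nu> \<beta>\<close> \<open>\<not> p ^ Suc m dvd \<nu> \<beta>0\<close> in auto)
    also have "\<dots> \<le> poly (Qp_vec p \<alpha>) x"
      using \<alpha> unfolding nonzero_vec_def by (intro S_set_sum_poly_Qp_le[OF p2 x \<nu>]) simp
    finally show ?thesis .
  qed
  then show ?thesis unfolding poly_gt_def by blast
qed

section \<open>Sufficiency\<close>

lemma int_poly_eventually_sign:
  fixes P :: "int poly"
  shows "P = 0 \<or> poly_gt P 0 \<or> poly_gt 0 P"
proof (induction P rule: pCons_induct)
  case (pCons a Q)
  show ?case
  proof (cases "Q = 0")
    case True
    then have "a \<noteq> 0" using pCons.hyps by simp
    then show ?thesis using True by (cases "a > 0") (auto simp: poly_gt_def intro!: exI[of _ 0])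
  next
    case False
    with pCons.IH consider (pos) N where "\<forall>x\<ge>N. poly Q x > 0" | (neg) N where "\<forall>x\<ge>N. poly Q x < 0"
      unfolding poly_gt_def by auto
    then show ?thesis
    proof cases
      case pos
      have "poly (pCons a Q) x > 0" if x: "x \<ge> max N (\<bar>a\<bar> + 1)" for x
      proof -
        have "poly Q x \<ge> 1" using pos x by force
        then have "x * poly Q x \<ge> x * 1" using x by (intro mult_left_mono) auto
        then show ?thesis using x abs_ge_minus_self[of a] by simp
      qed
      then have "poly_gt (pCons a Q) 0" unfolding poly_gt_def by (intro exI[of _ "max N (\<bar>a\<bar> + 1)"]) auto
      then show ?thesis by blast
    next
      case neg
      have "poly (pCons a Q) x < 0" if x: "x \<ge> max N (\<bar>a\<bar> + 1)" for x
      proof -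
        have "poly Q x \<le> -1" using neg x by force
        then have "x * poly Q x \<le> x * (-1)" using x by (intro mult_left_mono) auto
        then show ?thesis using x abs_ge_self[of a] by simp
      qed
      then have "poly_gt 0 (pCons a Q)" unfolding poly_gt_def by (intro exI[of _ "max N (\<bar>a\<bar> + 1)"]) auto
      then show ?thesis by blast
    qed
  qed
qed simp

lemma exists_bounded_summands:
  fixes c :: "nat \<Rightarrow> nat"
  assumes "k \<le> (\<Sum>i<r. c i)"
  shows "\<exists>\<delta>. (\<forall>i<r. \<delta> i \<le> c i) \<and> (\<Sum>i<r. \<delta> i) = k"
  using assms
proof (induction r arbitrary: k)
  case 0
  then show ?case by simp
next
  case (Suc r)
  define k' where "k' = min k (\<Sum>i<r. c i)"
  obtain \<delta> where \<delta>: "\<forall>i<r. \<delta> i \<le> c i" "(\<Sum>i<r. \<delta> i) = k'"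
    using Suc.IH[of k'] unfolding k'_def by auto
  have "k - k' \<le> c r" using Suc.prems unfolding k'_def by auto
  then have "\<forall>i<Suc r. (\<delta>(r := k - k')) i \<le> c i" using \<delta>(1) by (auto simp: less_Suc_eq)
  moreover have "(\<Sum>i<r. (\<delta>(r := k - k')) i) = (\<Sum>i<r. \<delta> i)" by (intro sum.cong) auto
  then have "(\<Sum>i<Suc r. (\<delta>(r := k - k')) i) = k" using \<delta>(2) unfolding k'_def by simp
  ultimately show ?case by blast
qed

text \<open>One more base-\<open>p\<close> digit: extend \<open>p \<cdot> g\<close> by a digit \<open>d\<^sub>0\<close> spread over the coordinates
  without creating carries, so that the digit sums still add up.\<close>

lemma exists_digit_extension:
  fixes g \<alpha> :: "nat \<Rightarrow> nat"
  assumes p2: "p \<ge> 2"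
    and le: "\<forall>i<r. p * g i \<le> \<alpha> i"
    and S: "(\<Sum>i<r. digit_sum p (g i)) \<le> digit_sum p (\<Sum>i<r. g i)"
    and d0: "d0 < p"
    and lt: "p * (\<Sum>i<r. g i) + d0 < (\<Sum>i<r. \<alpha> i)"
  shows "\<exists>\<gamma>. (\<forall>i<r. \<gamma> i \<le> \<alpha> i) \<and> (\<Sum>i<r. \<gamma> i) = p * (\<Sum>i<r. g i) + d0 \<and>
             (\<Sum>i<r. digit_sum p (\<gamma> i)) \<le> digit_sum p (p * (\<Sum>i<r. g i) + d0)"
proof -
  have "(\<Sum>i<r. \<alpha> i - p * g i) = (\<Sum>i<r. \<alpha> i) - (\<Sum>i<r. p * g i)"
    using le by (intro sum_subtractf_nat) auto
  then have "(\<Sum>i<r. \<alpha> i - p * g i) = (\<Sum>i<r. \<alpha> i) - p * (\<Sum>i<r. g i)"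
    by (simp add: sum_distrib_left)
  then have "d0 \<le> (\<Sum>i<r. \<alpha> i - p * g i)" using lt by simp
  then obtain \<delta> where \<delta>: "\<forall>i<r. \<delta> i \<le> \<alpha> i - p * g i" "(\<Sum>i<r. \<delta> i) = d0"
    using exists_bounded_summands by blast
  define \<gamma> where "\<gamma> i = p * g i + \<delta> i" for i
  have "\<delta> i < p" if "i < r" for i
    using member_le_sum[of i "{..<r}" \<delta>] that \<delta>(2) d0 by simp
  then have "digit_sum p (\<gamma> i) = int (\<delta> i) + digit_sum p (g i)" if "i < r" for i
    unfolding \<gamma>_def using poly_Qp_mult_add[OF p2] that by simp
  then have "(\<Sum>i<r. digit_sum p (\<gamma> i)) = int d0 + (\<Sum>i<r. digit_sum p (g i))"
    using \<delta>(2) by (simp add: sum.distrib flip: of_nat_sum)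
  also have "\<dots> \<le> digit_sum p (p * (\<Sum>i<r. g i) + d0)"
    using S poly_Qp_mult_add[OF p2 d0] by simp
  finally have "(\<Sum>i<r. digit_sum p (\<gamma> i)) \<le> digit_sum p (p * (\<Sum>i<r. g i) + d0)" .
  moreover have "\<forall>i<r. \<gamma> i \<le> \<alpha> i" using \<delta>(1) le unfolding \<gamma>_def by (simp add: le_diff_conv2 add.commute)
  moreover have "(\<Sum>i<r. \<gamma> i) = p * (\<Sum>i<r. g i) + d0"
    using \<delta>(2) unfolding \<gamma>_def by (simp add: sum.distrib sum_distrib_left)
  ultimately show ?thesis by blast
qed

lemma poly_gt_div_base:
  fixes \<alpha> :: "nat \<Rightarrow> nat"
  assumes p2: "p \<ge> 2" and gt: "poly_gt (\<Sum>i<r. Qp p (\<alpha> i)) (Qp p d)"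
  shows "poly_gt (\<Sum>i<r. Qp p (\<alpha> i div p)) (Qp p (d div p)) \<or>
    ((\<Sum>i<r. Qp p (\<alpha> i div p)) = Qp p (d div p) \<and> d mod p < (\<Sum>i<r. \<alpha> i mod p))"
proof -
  obtain N where N: "\<And>x. x \<ge> N \<Longrightarrow> poly (Qp p d) x < (\<Sum>i<r. poly (Qp p (\<alpha> i)) x)"
    using gt unfolding poly_gt_def by (auto simp: poly_sum)
  define P where "P = (\<Sum>i<r. Qp p (\<alpha> i div p)) - Qp p (d div p)"
  have split: "int (d mod p) + x * poly (Qp p (d div p)) x
      < int (\<Sum>i<r. \<alpha> i mod p) + x * (\<Sum>i<r. poly (Qp p (\<alpha> i div p)) x)" if "x \<ge> N" for x
    using N[OF that] poly_Qp_div_mod[OF p2, of d x] poly_Qp_div_mod[OF p2, of "\<alpha> _" x]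
    by (simp add: sum.distrib sum_distrib_left)
  have poly_P: "poly P x = (\<Sum>i<r. poly (Qp p (\<alpha> i div p)) x) - poly (Qp p (d div p)) x" for x
    unfolding P_def by (simp add: poly_sum)
  from int_poly_eventually_sign[of P] show ?thesis
  proof (elim disjE)
    assume "P = 0"
    then have "(\<Sum>i<r. Qp p (\<alpha> i div p)) = Qp p (d div p)" unfolding P_def by simp
    moreover have "int (d mod p) < int (\<Sum>i<r. \<alpha> i mod p)"
      using split[of "max N 0"] poly_P[of "max N 0"] \<open>P = 0\<close> by simp
    then have "d mod p < (\<Sum>i<r. \<alpha> i mod p)" by (simp only: of_nat_less_iff)
    ultimately show ?thesis by blast
  next
    assume "poly_gt P 0"
    then show ?thesis unfolding poly_gt_def poly_P by (simp add: poly_sum)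
  next
    assume "poly_gt 0 P"
    then obtain N' where "\<And>x. x \<ge> N' \<Longrightarrow> poly P x < 0" unfolding poly_gt_def by auto
    define x where "x = max (max N N') (int (\<Sum>i<r. \<alpha> i mod p) + 1)"
    have "poly P x < 0" using \<open>\<And>x. x \<ge> N' \<Longrightarrow> poly P x < 0\<close>[of x] unfolding x_def by simp
    then have "poly P x \<le> -1" by simp
    moreover have x_ge: "x \<ge> int (\<Sum>i<r. \<alpha> i mod p) + 1" unfolding x_def by simp
    then have "x \<ge> 0" by linarith
    ultimately have "x * poly P x \<le> - x" using mult_left_mono[of "poly P x" "-1" x] by simp
    moreover have "int (d mod p) + x * poly (Qp p (d div p)) x
      < int (\<Sum>i<r. \<alpha> i mod p) + x * (poly P x + poly (Qp p (d div p)) x)"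
      using split[of x] poly_P[of x] unfolding x_def by simp
    ultimately show ?thesis using x_ge by (simp add: algebra_simps)
  qed
qed

lemma sum_ne_0_if_poly_gt:
  fixes \<beta> :: "nat \<Rightarrow> nat"
  assumes p2: "p \<ge> 2" and gt: "poly_gt (\<Sum>i<r. Qp p (\<beta> i)) (Qp p e)"
  shows "(\<Sum>i<r. \<beta> i) \<noteq> 0"
proof
  assume "(\<Sum>i<r. \<beta> i) = 0"
  then have "\<forall>i<r. \<beta> i = 0" by simp
  then have "(\<Sum>i<r. Qp p (\<beta> i)) = 0" by simp
  moreover obtain N where "\<And>x. x \<ge> N \<Longrightarrow> poly (Qp p e) x < poly (\<Sum>i<r. Qp p (\<beta> i)) x"
    using gt unfolding poly_gt_def by auto
  ultimately have "poly (Qp p e) (max N 0) < 0" by simp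
  then show False using poly_Qp_nonneg[OF p2, of "max N 0" e] by simp
qed

lemma exists_dominated_digit_sum_le:
  fixes \<alpha> :: "nat \<Rightarrow> nat"
  assumes p2: "p \<ge> 2" and "poly_gt (\<Sum>i<r. Qp p (\<alpha> i)) (Qp p d)"
  shows "\<exists>\<gamma>. (\<forall>i<r. \<gamma> i \<le> \<alpha> i) \<and> (\<Sum>i<r. \<gamma> i) = d \<and>
    (\<Sum>i<r. digit_sum p (\<gamma> i)) \<le> digit_sum p d \<and> d < (\<Sum>i<r. \<alpha> i)"
  using assms(2)
proof (induction "\<Sum>i<r. \<alpha> i" arbitrary: \<alpha> d rule: less_induct)
  case less
  define \<alpha>1 where "\<alpha>1 i = \<alpha> i div p" for i
  have sum_\<alpha>: "(\<Sum>i<r. \<alpha> i) = p * (\<Sum>i<r. \<alpha>1 i) + (\<Sum>i<r. \<alpha> i mod p)"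
    unfolding \<alpha>1_def sum_distrib_left sum.distrib[symmetric] by simp
  have d: "d = p * (d div p) + d mod p" by simp
  have d0: "d mod p < p" using p2 by simp
  have le: "\<forall>i<r. p * \<alpha>1 i \<le> \<alpha> i" unfolding \<alpha>1_def by simp
  from poly_gt_div_base[OF p2 less.prems] show ?case
  proof (elim disjE conjE)
    assume gt: "poly_gt (\<Sum>i<r. Qp p (\<alpha> i div p)) (Qp p (d div p))"
    have "(\<Sum>i<r. \<alpha> i div p) \<noteq> 0" by (rule sum_ne_0_if_poly_gt[OF p2 gt])
    then have "(\<Sum>i<r. \<alpha>1 i) < (\<Sum>i<r. \<alpha> i)"
      unfolding \<alpha>1_def using p2
      by (intro sum_strict_mono_ex1) (auto simp: sum_eq_0_iff intro!: bexI div_less_dividend Nat.gr0I)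
    then obtain \<gamma>1 where \<gamma>1: "\<forall>i<r. \<gamma>1 i \<le> \<alpha>1 i" "(\<Sum>i<r. \<gamma>1 i) = d div p"
      "(\<Sum>i<r. digit_sum p (\<gamma>1 i)) \<le> digit_sum p (d div p)" "d div p < (\<Sum>i<r. \<alpha>1 i)"
      using less.hyps gt unfolding \<alpha>1_def by blast
    have "d < p * (\<Sum>i<r. \<alpha>1 i)" using \<gamma>1(4) p2 by (simp add: div_less_iff_less_mult mult.commute)
    then have "d < (\<Sum>i<r. \<alpha> i)" using sum_\<alpha> by linarith
    moreover have "\<forall>i<r. p * \<gamma>1 i \<le> \<alpha> i"
      using \<gamma>1(1) le by (meson mult_le_mono2 order_trans)
    ultimately show ?thesis
      using exists_digit_extension[OF p2 _ _ d0, of r \<gamma>1 \<alpha>] \<gamma>1(2,3) d by auto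
  next
    assume eq: "(\<Sum>i<r. Qp p (\<alpha> i div p)) = Qp p (d div p)" and "d mod p < (\<Sum>i<r. \<alpha> i mod p)"
    have "poly (\<Sum>i<r. Qp p (\<alpha>1 i)) (int p) = poly (Qp p (d div p)) (int p)"
      using eq unfolding \<alpha>1_def by simp
    then have sum_eq: "(\<Sum>i<r. \<alpha>1 i) = d div p"
      by (simp add: poly_sum poly_Qp_at_base[OF p2] flip: of_nat_sum)
    have digit_sum_eq: "(\<Sum>i<r. digit_sum p (\<alpha>1 i)) = digit_sum p (d div p)"
      unfolding \<alpha>1_def by (metis eq poly_sum)
    have "d < p * (d div p) + (\<Sum>i<r. \<alpha> i mod p)"
      using d \<open>d mod p < (\<Sum>i<r. \<alpha> i mod p)\<close> by linarith
    then have "d < (\<Sum>i<r. \<alpha> i)" using sum_\<alpha> sum_eq by simp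
    then show ?thesis
      using exists_digit_extension[OF p2 le _ d0] sum_eq digit_sum_eq d by auto
  qed
qed

lemma poly_gt_div_pow:
  fixes \<alpha> :: "nat \<Rightarrow> nat"
  assumes p2: "p \<ge> 2" and dvd: "\<forall>i<r. p ^ s dvd \<alpha> i"
    and gt: "poly_gt (\<Sum>i<r. Qp p (\<alpha> i)) (Qp p d)"
  shows "poly_gt (\<Sum>i<r. Qp p (\<alpha> i div p ^ s)) (Qp p (d div p ^ s))"
proof -
  obtain N where N: "\<And>x. x \<ge> N \<Longrightarrow> poly (Qp p d) x < (\<Sum>i<r. poly (Qp p (\<alpha> i)) x)"
    using gt unfolding poly_gt_def by (auto simp: poly_sum)
  have "poly (Qp p (d div p ^ s)) x < (\<Sum>i<r. poly (Qp p (\<alpha> i div p ^ s)) x)"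
    if x: "x \<ge> max N 1" for x
  proof -
    have "poly (Qp p (\<alpha> i)) x = x ^ s * poly (Qp p (\<alpha> i div p ^ s)) x" if "i < r" for i
      using dvd that poly_Qp_pow_mult[OF p2, of s "\<alpha> i div p ^ s" x] by simp
    then have "(\<Sum>i<r. poly (Qp p (\<alpha> i)) x) = x ^ s * (\<Sum>i<r. poly (Qp p (\<alpha> i div p ^ s)) x)"
      by (simp add: sum_distrib_left)
    moreover have "poly (Qp p d) x = x ^ s * poly (Qp p (d div p ^ s)) x + poly (Qp p (d mod p ^ s)) x"
      using poly_Qp_pow_mult_add[OF p2, of "d mod p ^ s" s "d div p ^ s" x] p2 by simp
    moreover have "poly (Qp p (d mod p ^ s)) x \<ge> 0" using x by (intro poly_Qp_nonneg[OF p2]) simp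
    ultimately have "x ^ s * poly (Qp p (d div p ^ s)) x < x ^ s * (\<Sum>i<r. poly (Qp p (\<alpha> i div p ^ s)) x)"
      using N[of x] x by linarith
    then show ?thesis using x by (simp add: mult_less_cancel_left_pos)
  qed
  then show ?thesis unfolding poly_gt_def poly_sum by (intro exI[of _ "max N 1"]) simp
qed

text \<open>A factorization given as a list of (monomial, multiplicity) pairs, repetitions allowed.\<close>

definition nu_of_list :: "(nat list \<times> nat) list \<Rightarrow> nat list \<Rightarrow> nat" where
  "nu_of_list ps \<beta> = sum_list (map snd (filter (\<lambda>q. fst q = \<beta>) ps))"

lemma nu_of_list_Nil [simp]: "nu_of_list [] \<beta> = 0"
  by (simp add: nu_of_list_def)

lemma nu_of_list_Cons: "nu_of_list (q # ps) \<beta> = (if fst q = \<beta> then snd q else 0) + nu_of_list ps \<beta>"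
  by (simp add: nu_of_list_def)

lemma supp_nu_of_list: "supp (nu_of_list ps) \<subseteq> fst ` set ps"
proof -
  have "nu_of_list ps \<beta> \<noteq> 0 \<Longrightarrow> \<beta> \<in> fst ` set ps" for \<beta>
    by (induction ps) (auto simp: nu_of_list_Cons split: if_splits)
  then show ?thesis unfolding supp_def by blast
qed

lemma sum_nu_of_list_superset:
  fixes h :: "nat list \<Rightarrow> 'a :: comm_semiring_1"
  assumes "finite F" "fst ` set ps \<subseteq> F"
  shows "(\<Sum>\<beta>\<in>F. of_nat (nu_of_list ps \<beta>) * h \<beta>) = (\<Sum>q\<leftarrow>ps. of_nat (snd q) * h (fst q))"
  using assms(2)
proof (induction ps)
  case (Cons q ps)
  have "(\<Sum>\<beta>\<in>F. of_nat (nu_of_list (q # ps) \<beta>) * h \<beta>)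
      = (\<Sum>\<beta>\<in>F. if fst q = \<beta> then of_nat (snd q) * h \<beta> else 0) + (\<Sum>\<beta>\<in>F. of_nat (nu_of_list ps \<beta>) * h \<beta>)"
  proof -
    have "of_nat (nu_of_list (q # ps) \<beta>) * h \<beta>
        = (if fst q = \<beta> then of_nat (snd q) * h \<beta> else 0) + of_nat (nu_of_list ps \<beta>) * h \<beta>" for \<beta>
      by (simp add: nu_of_list_Cons distrib_right)
    then show ?thesis by (simp add: sum.distrib)
  qed
  then show ?case using Cons assms(1) by (simp add: sum.delta)
qed simp

lemma sum_supp_nu_of_list:
  fixes h :: "nat list \<Rightarrow> 'a :: comm_semiring_1"
  shows "(\<Sum>\<beta>\<in>supp (nu_of_list ps). of_nat (nu_of_list ps \<beta>) * h \<beta>) = (\<Sum>q\<leftarrow>ps. of_nat (snd q) * h (fst q))"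
proof -
  have "(\<Sum>\<beta>\<in>supp (nu_of_list ps). of_nat (nu_of_list ps \<beta>) * h \<beta>)
      = (\<Sum>\<beta>\<in>fst ` set ps. of_nat (nu_of_list ps \<beta>) * h \<beta>)"
    using supp_nu_of_list by (intro sum.mono_neutral_left) (auto simp: supp_def)
  also have "\<dots> = (\<Sum>q\<leftarrow>ps. of_nat (snd q) * h (fst q))"
    by (rule sum_nu_of_list_superset) auto
  finally show ?thesis .
qed

lemma digit_sum_nu_of_list_le:
  assumes "p \<ge> 2"
  shows "(\<Sum>\<beta>\<in>supp (nu_of_list ps). digit_sum p (nu_of_list ps \<beta>)) \<le> (\<Sum>q\<leftarrow>ps. digit_sum p (snd q))"
proof -
  have "(\<Sum>\<beta>\<in>F. digit_sum p (nu_of_list ps \<beta>)) \<le> (\<Sum>q\<leftarrow>ps. digit_sum p (snd q))"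
    if "finite F" "fst ` set ps \<subseteq> F" for F
    using that(2)
  proof (induction ps)
    case (Cons q ps)
    have "(\<Sum>\<beta>\<in>F. digit_sum p (nu_of_list (q # ps) \<beta>))
        \<le> (\<Sum>\<beta>\<in>F. digit_sum p (if fst q = \<beta> then snd q else 0) + digit_sum p (nu_of_list ps \<beta>))"
      unfolding nu_of_list_Cons by (intro sum_mono digit_sum_add_le[OF assms])
    also have "\<dots> = digit_sum p (snd q) + (\<Sum>\<beta>\<in>F. digit_sum p (nu_of_list ps \<beta>))"
    proof -
      have "digit_sum p (if fst q = \<beta> then snd q else 0) = (if fst q = \<beta> then digit_sum p (snd q) else 0)"
        for \<beta> by simp
      then show ?thesis using Cons.prems that(1) by (simp add: sum.distrib sum.delta)
    qed
    finally show ?case using Cons by simp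
  qed simp
  moreover have "(\<Sum>\<beta>\<in>supp (nu_of_list ps). digit_sum p (nu_of_list ps \<beta>))
      = (\<Sum>\<beta>\<in>fst ` set ps. digit_sum p (nu_of_list ps \<beta>))"
    using supp_nu_of_list by (intro sum.mono_neutral_left) (auto simp: supp_def)
  ultimately show ?thesis by simp
qed

text \<open>The witness factorization: \<open>q\<gamma>\<^sub>i\<close> copies of each unit vector \<open>e\<^sub>i\<close> together with \<open>q\<close> copies
  of the remainder \<open>a - \<gamma>\<close>; the latter is a nonzero vector because \<open>\<Sum>\<gamma> < \<Sum>a\<close>.\<close>

lemma S_set_witness:
  fixes a \<gamma> :: "nat \<Rightarrow> nat"
  assumes p2: "p \<ge> 2" and len: "length \<alpha> = r" and \<alpha>: "\<forall>i<r. \<alpha> ! i = q * a i"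
    and \<gamma>: "\<forall>i<r. \<gamma> i \<le> a i" and lt: "(\<Sum>i<r. \<gamma> i) < (\<Sum>i<r. a i)"
    and d: "d < q * ((\<Sum>i<r. \<gamma> i) + 1)"
  shows "\<exists>\<nu>\<in>S_set r \<alpha> d. nu_size \<nu> = q * ((\<Sum>i<r. \<gamma> i) + 1) \<and>
    (\<Sum>\<beta>\<in>supp \<nu>. digit_sum p (\<nu> \<beta>)) \<le> (\<Sum>i<r. digit_sum p (q * \<gamma> i)) + digit_sum p q"
proof -
  define e where "e i = (replicate r 0)[i := (1::nat)]" for i
  define R where "R = map (\<lambda>i. a i - \<gamma> i) [0..<r]"
  define ps where "ps = map (\<lambda>i. (e i, q * \<gamma> i)) [0..<r] @ [(R, q)]"
  define \<nu> where "\<nu> = nu_of_list ps"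
  have e: "e i ! j = (if i = j then 1 else 0)" if "i < r" "j < r" for i j
    using that unfolding e_def by (simp add: nth_list_update)
  have sum_\<nu>: "(\<Sum>\<beta>\<in>supp \<nu>. \<nu> \<beta> * h \<beta>) = (\<Sum>i<r. q * \<gamma> i * h (e i)) + q * h R" for h
    using sum_supp_nu_of_list[of ps h] unfolding \<nu>_def ps_def
    by (simp add: atLeast0LessThan flip: sum_set_upt_conv_sum_list_nat)
  have "nonzero_vec r (e i)" if "i < r" for i
    unfolding nonzero_vec_def using that e[OF that that] by (auto simp: e_def)
  moreover have "nonzero_vec r R"
  proof -
    have "\<exists>i<r. \<gamma> i < a i"
    proof (rule ccontr)
      assume "\<not> (\<exists>i<r. \<gamma> i < a i)"
      then have "(\<Sum>i<r. a i) \<le> (\<Sum>i<r. \<gamma> i)" by (intro sum_mono) auto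
      then show False using lt by simp
    qed
    then show ?thesis unfolding nonzero_vec_def R_def by auto
  qed
  ultimately have nz: "\<forall>\<beta>\<in>supp \<nu>. nonzero_vec r \<beta>"
    using supp_nu_of_list[of ps] unfolding \<nu>_def ps_def by auto
  have sums: "(\<Sum>\<beta>\<in>supp \<nu>. \<nu> \<beta> * \<beta> ! j) = \<alpha> ! j" if j: "j < r" for j
  proof -
    have "(\<Sum>i<r. q * \<gamma> i * (e i ! j)) = (\<Sum>i<r. if i = j then q * \<gamma> j else 0)"
      using e j by (intro sum.cong) auto
    then have "(\<Sum>\<beta>\<in>supp \<nu>. \<nu> \<beta> * \<beta> ! j) = q * \<gamma> j + q * (a j - \<gamma> j)"
      using sum_\<nu>[of "\<lambda>\<beta>. \<beta> ! j"] j unfolding R_def by simp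
    also have "\<dots> = \<alpha> ! j" using \<alpha> \<gamma> j by (simp add: algebra_simps)
    finally show ?thesis .
  qed
  have size: "nu_size \<nu> = q * ((\<Sum>i<r. \<gamma> i) + 1)"
    using sum_\<nu>[of "\<lambda>_. 1"] unfolding nu_size_def by (simp add: sum_distrib_left)
  have "finite (supp \<nu>)" unfolding \<nu>_def by (rule finite_subset[OF supp_nu_of_list]) simp
  then have "\<nu> \<in> S_set r \<alpha> d" unfolding S_set_def using nz sums size d by auto
  moreover have "(\<Sum>\<beta>\<in>supp \<nu>. digit_sum p (\<nu> \<beta>)) \<le> (\<Sum>i<r. digit_sum p (q * \<gamma> i)) + digit_sum p q"
    using digit_sum_nu_of_list_le[OF p2, of ps] unfolding \<nu>_def ps_def
    by (simp add: atLeast0LessThan flip: sum_set_upt_conv_sum_list_nat)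
  ultimately show ?thesis using size by blast
qed

lemma exists_S_set_digit_sum_le:
  assumes p2: "p \<ge> 2" and \<alpha>: "nonzero_vec r \<alpha>" and gt: "poly_gt (Qp_vec p \<alpha>) (Qp p d)"
  shows "\<exists>\<nu>\<in>S_set r \<alpha> d. (\<Sum>\<beta>\<in>supp \<nu>. digit_sum p (\<nu> \<beta>))
    + int (p - 1) * int (multiplicity p (Gcd (set \<alpha>))) \<le> digit_sum p (nu_size \<nu> - 1) + 1"
proof -
  define s where "s = multiplicity p (Gcd (set \<alpha>))"
  define a where "a i = \<alpha> ! i div p ^ s" for i
  have len: "length \<alpha> = r" using \<alpha> unfolding nonzero_vec_def by simp
  have dvd: "\<forall>i<r. p ^ s dvd \<alpha> ! i"
    using len multiplicity_dvd[of p "Gcd (set \<alpha>)"] unfolding s_def by (auto intro: dvd_trans Gcd_dvd)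
  have "poly_gt (\<Sum>i<r. Qp p (\<alpha> ! i)) (Qp p d)" using gt len unfolding Qp_vec_def by simp
  then have "poly_gt (\<Sum>i<r. Qp p (a i)) (Qp p (d div p ^ s))"
    unfolding a_def by (rule poly_gt_div_pow[OF p2 dvd])
  then obtain \<gamma> where \<gamma>: "\<forall>i<r. \<gamma> i \<le> a i" "(\<Sum>i<r. \<gamma> i) = d div p ^ s"
    "(\<Sum>i<r. digit_sum p (\<gamma> i)) \<le> digit_sum p (d div p ^ s)" "d div p ^ s < (\<Sum>i<r. a i)"
    using exists_dominated_digit_sum_le[OF p2] by blast
  have "d mod p ^ s < p ^ s" using p2 by simp
  then have "d < p ^ s * (d div p ^ s) + p ^ s" using mult_div_mod_eq[of "p ^ s" d] by linarith
  then have "d < p ^ s * ((\<Sum>i<r. \<gamma> i) + 1)" using \<gamma>(2) by simp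
  moreover have "\<forall>i<r. \<alpha> ! i = p ^ s * a i" using dvd unfolding a_def by simp
  ultimately obtain \<nu> where \<nu>: "\<nu> \<in> S_set r \<alpha> d" and size: "nu_size \<nu> = p ^ s * (d div p ^ s + 1)"
    and bound: "(\<Sum>\<beta>\<in>supp \<nu>. digit_sum p (\<nu> \<beta>)) \<le> (\<Sum>i<r. digit_sum p (p ^ s * \<gamma> i)) + digit_sum p (p ^ s)"
    using S_set_witness[OF p2 len _ \<gamma>(1)] \<gamma>(2,4) by force
  have scale: "digit_sum p (p ^ s * n) = digit_sum p n" for n using poly_Qp_pow_mult[OF p2] by simp
  have "digit_sum p 1 = 1" using Qp_Suc_not_dvd[OF p2, of 0] p2 by simp
  then have "digit_sum p (p ^ s) = 1" using scale[of 1] by simp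
  moreover have "(\<Sum>i<r. digit_sum p (p ^ s * \<gamma> i)) = (\<Sum>i<r. digit_sum p (\<gamma> i))"
    using scale by simp
  ultimately have "(\<Sum>\<beta>\<in>supp \<nu>. digit_sum p (\<nu> \<beta>)) \<le> digit_sum p (d div p ^ s) + 1"
    using bound \<gamma>(3) by linarith
  moreover have "digit_sum p (nu_size \<nu> - 1) = digit_sum p (d div p ^ s) + int (p - 1) * int s"
    using size digit_sum_pow_mult_pred[OF p2, of "d div p ^ s + 1" s] by simp
  ultimately show ?thesis using \<nu> unfolding s_def by force
qed

theorem lemma2p10:
  fixes r d p :: nat and \<alpha> :: "nat list"
  assumes "r \<ge> 1"
    and "nonzero_vec r \<alpha>"
    and "d < sum_list \<alpha>"
    and "prime p"
  shows "(\<exists>\<nu>\<in>S_set r \<alpha> d.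
            ord_rat p (of_nat (p ^ multiplicity p (Gcd (set \<alpha>))) * multinom \<nu> / of_nat (nu_size \<nu>)) = 0)
         \<longleftrightarrow> poly_gt (Qp_vec p \<alpha>) (Qp p d)"
proof -
  have p2: "p \<ge> 2" using assms(4) by (rule prime_ge_2_nat)
  define s where "s = multiplicity p (Gcd (set \<alpha>))"
  have ord_zero_iff: "ord_rat p (of_nat (p ^ s) * multinom \<nu> / of_nat (nu_size \<nu>)) = 0 \<longleftrightarrow>
      digit_sum p (nu_size \<nu> - 1) + 1 = (\<Sum>\<beta>\<in>supp \<nu>. digit_sum p (\<nu> \<beta>)) + int (p - 1) * int s"
    if "\<nu> \<in> S_set r \<alpha> d" for \<nu>
    using that ord_multinom_eq_0_iff[OF assms(4)] unfolding S_set_def by auto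
  show ?thesis unfolding s_def[symmetric]
  proof
    assume "\<exists>\<nu>\<in>S_set r \<alpha> d. ord_rat p (of_nat (p ^ s) * multinom \<nu> / of_nat (nu_size \<nu>)) = 0"
    then show "poly_gt (Qp_vec p \<alpha>) (Qp p d)"
      using S_set_poly_gt_if_digit_sum_eq[OF p2 _ assms(2)] ord_zero_iff unfolding s_def by blast
  next
    assume "poly_gt (Qp_vec p \<alpha>) (Qp p d)"
    then obtain \<nu> where "\<nu> \<in> S_set r \<alpha> d" and "(\<Sum>\<beta>\<in>supp \<nu>. digit_sum p (\<nu> \<beta>)) + int (p - 1) * int s
        \<le> digit_sum p (nu_size \<nu> - 1) + 1"
      using exists_S_set_digit_sum_le[OF p2 assms(2)] unfolding s_def by blast
    moreover note S_set_digit_sum_bound[OF p2 this(1) assms(2), folded s_def]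
    ultimately show "\<exists>\<nu>\<in>S_set r \<alpha> d. ord_rat p (of_nat (p ^ s) * multinom \<nu> / of_nat (nu_size \<nu>)) = 0"
      using ord_zero_iff by force
  qed
qed

end
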